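(* Let $n\geq 3$ and let $W_n=K_1\vee C_n$ be the wheel of order $n+1$. Then $\gamma_{sR}(W_4)=2$, and $\gamma_{sR}(W_n)=1$ for every $n\neq 4$.
   Context: $C_n$ denotes the cycle on $n$ vertices and $K_1$ the one-vertex graph. The join $G_1\vee G_2$ of two graphs has vertex set $V(G_1)\cup V(G_2)$ (disjoint union) and edge set $E(G_1)\cup E(G_2)\cup\{uv: u\in V(G_1), v\in V(G_2)\}$. For a graph $G=(V,E)$ and $x\in V$, $N_G[x]=\{x\}\cup\{y: xy\in E\}$. A signed Roman dominating function (SRDF) on $G$ is a function $f:V\to\{-1,1,2\}$ such that (a) $\sum_{y\in N_G[x]}f(y)\geq 1$ for every $x\in V$, and (b) every vertex $x$ with $f(x)=-1$ is adjacent to at least one vertex $y$ with $f(y)=2$. The weight of $f$ is $\sum_{x\in V}f(x)$, and $\gamma_{sR}(G)$ is the minimum weight of an SRDF on $G$. *)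

theory Defs
  imports Main
begin

text \<open>Simple graphs given by a finite vertex set V and symmetric irreflexive adjacency E.\<close>

definition closed_nbhd :: "'a set \<Rightarrow> ('a \<Rightarrow> 'a \<Rightarrow> bool) \<Rightarrow> 'a \<Rightarrow> 'a set" where
  "closed_nbhd V E x = {x} \<union> {y \<in> V. E x y}"

definition is_SRDF :: "'a set \<Rightarrow> ('a \<Rightarrow> 'a \<Rightarrow> bool) \<Rightarrow> ('a \<Rightarrow> int) \<Rightarrow> bool" where
  "is_SRDF V E f \<longleftrightarrow>
     (\<forall>x\<in>V. f x \<in> {-1, 1, 2}) \<and>
     (\<forall>x\<in>V. (\<Sum>y\<in>closed_nbhd V E x. f y) \<ge> 1) \<and>
     (\<forall>x\<in>V. f x = -1 \<longrightarrow> (\<exists>y\<in>V. E x y \<and> f y = 2))"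

definition weight :: "'a set \<Rightarrow> ('a \<Rightarrow> int) \<Rightarrow> int" where
  "weight V f = (\<Sum>x\<in>V. f x)"

text \<open>Signed Roman domination number: minimum weight of an SRDF
  (the set of weights is finite and, for nonempty finite V, nonempty).\<close>
definition gamma_sR :: "'a set \<Rightarrow> ('a \<Rightarrow> 'a \<Rightarrow> bool) \<Rightarrow> int" where
  "gamma_sR V E = Min {weight V f | f. is_SRDF V E f}"

text \<open>Wheel W_n = K_1 join C_n: vertices 0..n-1 form the cycle
  (i adjacent to (i+1) mod n), vertex n is the hub.\<close>
definition wheel_V :: "nat \<Rightarrow> nat set" where
  "wheel_V n = {0..n}"

definition cycle_adj :: "nat \<Rightarrow> nat \<Rightarrow> nat \<Rightarrow> bool" where
  "cycle_adj n i j \<longleftrightarrow> i < n \<and> j < n \<and> (j = (i + 1) mod n \<or> i = (j + 1) mod n)"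

definition wheel_E :: "nat \<Rightarrow> nat \<Rightarrow> nat \<Rightarrow> bool" where
  "wheel_E n i j \<longleftrightarrow> cycle_adj n i j \<or> (i = n \<and> j < n) \<or> (j = n \<and> i < n)"

end

theory Submission
  imports Defs
begin

text \<open>A dominating vertex has the whole vertex set as closed neighbourhood, so every SRDF of a
  wheel has weight at least 1. On \<open>W\<^sub>4\<close> the closed neighbourhood of a rim vertex misses only the
  opposite rim vertex, so each rim label is at most the weight minus 1; weight 1 would force all
  rim labels to be \<open>-1\<close> and the hub label to be 5. The upper bounds come from explicit labellings:
  hub 2 and alternating \<open>-1, 1\<close> around the rim, with the pattern \<open>-1, -1, 2, -1\<close> at the start of the
  rim when \<open>n \<ge> 6\<close> is even, so that the rim labels sum to \<open>-1\<close> (to 0 for \<open>n = 4\<close>). Such a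
  labelling is an SRDF as soon as any three consecutive rim labels sum to at least \<open>-1\<close>.\<close>

lemma finite_SRDF_weights:
  assumes "finite V"
  shows "finite {weight V f | f. is_SRDF V E f}"
proof (rule finite_subset)
  show "{weight V f | f. is_SRDF V E f} \<subseteq> {- int (card V) .. 2 * int (card V)}"
  proof
    fix w assume "w \<in> {weight V f | f. is_SRDF V E f}"
    then obtain f where w: "w = weight V f" and f: "is_SRDF V E f" by blast
    have labels: "\<forall>x\<in>V. f x \<in> {-1, 1, 2}" using f by (simp add: is_SRDF_def)
    have "(\<Sum>x\<in>V. f x) \<le> (\<Sum>x\<in>V. 2)" using labels by (intro sum_mono) auto
    moreover have "(\<Sum>x\<in>V. -1) \<le> (\<Sum>x\<in>V. f x)" using labels by (intro sum_mono) auto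
    ultimately show "w \<in> {- int (card V) .. 2 * int (card V)}" by (simp add: w weight_def)
  qed
qed simp

lemma gamma_sR_eqI:
  assumes "finite V" "is_SRDF V E f" "weight V f = w"
    and "\<And>g. is_SRDF V E g \<Longrightarrow> w \<le> weight V g"
  shows "gamma_sR V E = w"
  unfolding gamma_sR_def
proof (rule Min_eqI)
  show "finite {weight V f | f. is_SRDF V E f}" using assms(1) by (rule finite_SRDF_weights)
  show "w \<in> {weight V f | f. is_SRDF V E f}" using assms(2,3) by blast
qed (use assms(4) in blast)

lemma SRDF_weight_ge_1_if_dominating_vertex:
  assumes "is_SRDF V E f" "u \<in> V" "closed_nbhd V E u = V"
  shows "weight V f \<ge> 1"
  using assms unfolding is_SRDF_def weight_def by force

definition cycle_pred :: "nat \<Rightarrow> nat \<Rightarrow> nat" where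
  "cycle_pred n i = (if i = 0 then n - 1 else i - 1)"

definition cycle_succ :: "nat \<Rightarrow> nat \<Rightarrow> nat" where
  "cycle_succ n i = (if i = n - 1 then 0 else i + 1)"

lemma closed_nbhd_wheel_hub: "closed_nbhd (wheel_V n) (wheel_E n) n = wheel_V n"
  by (auto simp: closed_nbhd_def wheel_V_def wheel_E_def cycle_adj_def)

lemma cycle_adj_iff:
  assumes "n \<ge> 3" "i < n" "j < n"
  shows "cycle_adj n i j \<longleftrightarrow> j = cycle_pred n i \<or> j = cycle_succ n i"
  using assms unfolding cycle_adj_def cycle_pred_def cycle_succ_def
  by (cases "i = 0"; cases "i = n - 1"; cases "j = 0"; cases "j = n - 1") (auto simp: mod_if)

lemma closed_nbhd_wheel_rim:
  assumes "n \<ge> 3" "i < n"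
  shows "closed_nbhd (wheel_V n) (wheel_E n) i = {i, cycle_pred n i, cycle_succ n i, n}"
proof -
  have "cycle_pred n i < n" "cycle_succ n i < n"
    using assms by (auto simp: cycle_pred_def cycle_succ_def)
  moreover have "\<not> cycle_adj n i n" by (simp add: cycle_adj_def)
  ultimately show ?thesis
    using assms cycle_adj_iff[OF assms]
    unfolding closed_nbhd_def wheel_V_def wheel_E_def
    by (auto simp: order_le_less)
qed

lemma sum_closed_nbhd_wheel_rim:
  assumes "n \<ge> 3" "i < n"
  shows "(\<Sum>y\<in>closed_nbhd (wheel_V n) (wheel_E n) i. f y)
           = f i + f (cycle_pred n i) + f (cycle_succ n i) + f n"
proof -
  have "i \<noteq> cycle_pred n i" "i \<noteq> cycle_succ n i" "cycle_pred n i \<noteq> cycle_succ n i"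
    "cycle_pred n i \<noteq> n" "cycle_succ n i \<noteq> n"
    using assms by (auto simp: cycle_pred_def cycle_succ_def)
  then show ?thesis using assms by (simp add: closed_nbhd_wheel_rim add.assoc)
qed

lemma SRDF_wheel_weight_ge_1:
  assumes "is_SRDF (wheel_V n) (wheel_E n) f"
  shows "weight (wheel_V n) f \<ge> 1"
  by (rule SRDF_weight_ge_1_if_dominating_vertex[OF assms _ closed_nbhd_wheel_hub])
    (simp add: wheel_V_def)

lemma SRDF_wheel_if_hub_2:
  assumes "n \<ge> 3" "f n = 2" "\<And>i. i < n \<Longrightarrow> f i \<in> {-1, 1, 2}"
    and "\<And>i. i < n \<Longrightarrow> f i + f (cycle_pred n i) + f (cycle_succ n i) \<ge> -1"
    and "weight (wheel_V n) f \<ge> 1"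
  shows "is_SRDF (wheel_V n) (wheel_E n) f"
  unfolding is_SRDF_def
proof (intro conjI ballI impI)
  fix x assume x: "x \<in> wheel_V n"
  then consider "x = n" | "x < n" by (cases "x = n") (auto simp: wheel_V_def)
  then show "f x \<in> {-1, 1, 2}" using assms(2,3) by cases auto
  show "(\<Sum>y\<in>closed_nbhd (wheel_V n) (wheel_E n) x. f y) \<ge> 1"
  proof (cases "x = n")
    case True
    then show ?thesis using assms(5) closed_nbhd_wheel_hub by (simp add: weight_def)
  next
    case False
    then have "x < n" using x by (simp add: wheel_V_def)
    then show ?thesis
      using assms(2) assms(4)[of x] sum_closed_nbhd_wheel_rim[OF assms(1), of x f] by simp
  qed
  assume "f x = -1"
  then have "x < n" using x assms(2) by (cases "x = n") (auto simp: wheel_V_def)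
  then show "\<exists>y\<in>wheel_V n. wheel_E n x y \<and> f y = 2"
    using assms(2) by (intro bexI[of _ n]) (auto simp: wheel_E_def wheel_V_def)
qed

lemma SRDF_wheel_4_weight_ge_2:
  assumes f: "is_SRDF (wheel_V 4) (wheel_E 4) f"
  shows "weight (wheel_V 4) f \<ge> 2"
proof -
  have labels: "f x \<in> {-1, 1, 2}" if "x \<le> 4" for x
    using f that by (simp add: is_SRDF_def wheel_V_def)
  have weight: "weight (wheel_V 4) f = f 0 + f 1 + f 2 + f 3 + f 4"
    by (simp add: weight_def wheel_V_def numeral_eq_Suc atLeast0_atMost_Suc)
  have rim: "f i + f (cycle_pred 4 i) + f (cycle_succ 4 i) + f 4 \<ge> 1" if "i < 4" for i
  proof -
    have "(\<Sum>y\<in>closed_nbhd (wheel_V 4) (wheel_E 4) i. f y) \<ge> 1"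
      using f that by (simp add: is_SRDF_def wheel_V_def)
    then show ?thesis using that by (simp add: sum_closed_nbhd_wheel_rim)
  qed
  have rim_le: "f j \<le> weight (wheel_V 4) f - 1" if "j < 4" for j
  proof -
    have "j \<in> {0, 1, 2, 3}" using that by auto
    then show ?thesis
      unfolding weight using rim[of 2] rim[of 3] rim[of 0] rim[of 1]
      by (auto simp: cycle_pred_def cycle_succ_def eval_nat_numeral)
  qed
  have "weight (wheel_V 4) f \<noteq> 1"
  proof
    assume "weight (wheel_V 4) f = 1"
    then have "f j = -1" if "j < 4" for j
      using rim_le[OF that] labels[of j] that by auto
    then show False using labels[of 4] weight \<open>weight (wheel_V 4) f = 1\<close> by simp
  qed
  moreover have "weight (wheel_V 4) f \<ge> 1" using f by (rule SRDF_wheel_weight_ge_1)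
  ultimately show ?thesis by simp
qed

definition alternating_sign :: "nat \<Rightarrow> int" where
  "alternating_sign x = (if even x then -1 else 1)"

definition patched_alternating_sign :: "nat \<Rightarrow> int" where
  "patched_alternating_sign x = (if x = 1 \<or> x = 3 then -1 else if x = 2 then 2 else alternating_sign x)"

definition wheel_labelling :: "nat \<Rightarrow> nat \<Rightarrow> int" where
  "wheel_labelling n x =
     (if x = n then 2
      else if even n \<and> n \<noteq> 4 then patched_alternating_sign x
      else alternating_sign x)"

lemma sum_alternating_sign_even: "(\<Sum>x<2 * k. alternating_sign x) = 0"
  by (induction k) (auto simp: alternating_sign_def)

lemma sum_alternating_sign_odd: "(\<Sum>x<2 * k + 1. alternating_sign x) = -1"
  using sum_alternating_sign_even[of k] by (simp add: alternating_sign_def)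

lemma sum_patched_alternating_sign: "(\<Sum>x<2 * k + 6. patched_alternating_sign x) = -1"
proof (induction k)
  case 0
  have "{..<6::nat} = {0, 1, 2, 3, 4, 5}" by auto
  then show ?case by (simp add: patched_alternating_sign_def alternating_sign_def)
next
  case (Suc k)
  have "2 * Suc k + 6 = Suc (Suc (2 * k + 6))" by simp
  then have "(\<Sum>x<2 * Suc k + 6. patched_alternating_sign x)
      = (\<Sum>x<2 * k + 6. patched_alternating_sign x)
        + (patched_alternating_sign (2 * k + 6) + patched_alternating_sign (Suc (2 * k + 6)))"
    by (simp only: sum.lessThan_Suc add.assoc)
  also have "\<dots> = -1"
    using Suc by (simp add: patched_alternating_sign_def alternating_sign_def)
  finally show ?case .
qed

lemma alternating_sign_triple:
  assumes "n \<ge> 3" "i < n"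
  shows "alternating_sign i + alternating_sign (cycle_pred n i) + alternating_sign (cycle_succ n i) \<ge> -1"
  using assms by (auto simp: alternating_sign_def cycle_pred_def cycle_succ_def)

lemma patched_alternating_sign_triple:
  assumes "n \<ge> 6" "even n" "i < n"
  shows "patched_alternating_sign i + patched_alternating_sign (cycle_pred n i)
           + patched_alternating_sign (cycle_succ n i) \<ge> -1"
  using assms
  by (auto simp: patched_alternating_sign_def alternating_sign_def cycle_pred_def cycle_succ_def)

lemma weight_wheel_labelling:
  assumes "n \<ge> 3"
  shows "weight (wheel_V n) (wheel_labelling n) = (if n = 4 then 2 else 1)"
proof -
  have "wheel_V n = insert n {..<n}" by (auto simp: wheel_V_def)
  then have weight: "weight (wheel_V n) (wheel_labelling n) = 2 + (\<Sum>x<n. wheel_labelling n x)"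
    by (simp add: weight_def wheel_labelling_def)
  consider "n = 4" | k where "n = 2 * k + 6" | k where "n = 2 * k + 1"
  proof -
    have "n = 4 \<or> (\<exists>k. n = 2 * k + 6) \<or> (\<exists>k. n = 2 * k + 1)" using assms by presburger
    then show thesis using that by blast
  qed
  then show ?thesis
  proof cases
    case 1
    then show ?thesis using weight sum_alternating_sign_even[of 2] by (simp add: wheel_labelling_def)
  next
    case 2
    then show ?thesis using weight sum_patched_alternating_sign[of k] by (simp add: wheel_labelling_def)
  next
    case 3
    then have "n \<noteq> 4" "odd n" by presburger+
    then show ?thesis
      using weight sum_alternating_sign_odd[of k] 3 by (simp add: wheel_labelling_def)
  qed
qed

lemma SRDF_wheel_labelling:
  assumes "n \<ge> 3"
  shows "is_SRDF (wheel_V n) (wheel_E n) (wheel_labelling n)"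
proof (rule SRDF_wheel_if_hub_2[OF assms])
  fix i assume i: "i < n"
  then have "cycle_pred n i < n" "cycle_succ n i < n"
    by (auto simp: cycle_pred_def cycle_succ_def)
  then have "i \<noteq> n" "cycle_pred n i \<noteq> n" "cycle_succ n i \<noteq> n" using i by auto
  moreover have "n \<ge> 6" if "even n" "n \<noteq> 4" using assms that by presburger
  ultimately show "wheel_labelling n i + wheel_labelling n (cycle_pred n i)
               + wheel_labelling n (cycle_succ n i) \<ge> -1"
    using assms i alternating_sign_triple[of n i] patched_alternating_sign_triple[of n i]
    by (simp add: wheel_labelling_def)
qed (use weight_wheel_labelling[OF assms] in
      \<open>auto simp: wheel_labelling_def patched_alternating_sign_def alternating_sign_def\<close>)

theorem mainTheorem12:
  fixes n :: nat
  assumes "n \<ge> 3"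
  shows "gamma_sR (wheel_V n) (wheel_E n) = (if n = 4 then 2 else 1)"
proof (rule gamma_sR_eqI)
  show "finite (wheel_V n)" by (simp add: wheel_V_def)
  show "is_SRDF (wheel_V n) (wheel_E n) (wheel_labelling n)"
    using assms by (rule SRDF_wheel_labelling)
  show "weight (wheel_V n) (wheel_labelling n) = (if n = 4 then 2 else 1)"
    using assms by (rule weight_wheel_labelling)
  fix g assume "is_SRDF (wheel_V n) (wheel_E n) g"
  then show "(if n = 4 then 2 else 1) \<le> weight (wheel_V n) g"
    using SRDF_wheel_weight_ge_1 SRDF_wheel_4_weight_ge_2 by auto
qed

end
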